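(* Let $G \leq \mathrm{Aut}(K_{n,n})$ be a subgroup isomorphic to $A_4$. Suppose there is an embedding $\Gamma$ of $K_{n,n}$ in $S^3$ such that $G$ is induced on $\Gamma$ by an isomorphic subgroup $\widehat{G} \leq \mathrm{SO}(4)$. Then no element of order 2 of $G$ fixes exactly one vertex of $V$.
   Context: $K_{n,n}$ is the complete bipartite graph with vertex sets $V$, $W$ of $n$ vertices each; every vertex of $V$ is adjacent to every vertex of $W$, and there are no other edges. $S^3$ is the unit sphere in $\mathbb{R}^4$, on which $\mathrm{SO}(4)$ acts by isometries. "$G$ is induced on $\Gamma$ by an isomorphic subgroup $\widehat{G} \leq \mathrm{SO}(4)$" means every element of $\widehat{G}$ leaves $\Gamma$ setwise invariant, and restricting to $\Gamma$ gives an isomorphism from $\widehat{G}$ onto $G$ (each element of $\widehat{G}$ inducing the corresponding automorphism of the graph). *)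

theory Defs
  imports "HOL-Analysis.Analysis" "HOL-Algebra.Sym_Groups" "HOL-Library.Numeral_Type"
begin

definition KV :: "nat \<Rightarrow> (bool \<times> nat) set" where
  "KV n = {(False, i) | i. i < n}"

definition KW :: "nat \<Rightarrow> (bool \<times> nat) set" where
  "KW n = {(True, i) | i. i < n}"

definition Kvert :: "nat \<Rightarrow> (bool \<times> nat) set" where
  "Kvert n = KV n \<union> KW n"

definition Kadj :: "nat \<Rightarrow> bool \<times> nat \<Rightarrow> bool \<times> nat \<Rightarrow> bool" where
  "Kadj n x y \<longleftrightarrow> (x \<in> KV n \<and> y \<in> KW n) \<or> (x \<in> KW n \<and> y \<in> KV n)"

definition Knn_aut :: "nat \<Rightarrow> (bool \<times> nat \<Rightarrow> bool \<times> nat) set" where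
  "Knn_aut n = {g. g permutes Kvert n \<and>
      (\<forall>x\<in>Kvert n. \<forall>y\<in>Kvert n. Kadj n (g x) (g y) \<longleftrightarrow> Kadj n x y)}"

definition Knn_aut_group :: "nat \<Rightarrow> (bool \<times> nat \<Rightarrow> bool \<times> nat) monoid" where
  "Knn_aut_group n = \<lparr>carrier = Knn_aut n, mult = (\<circ>), one = id\<rparr>"

definition SO4 :: "(real^4^4) monoid" where
  "SO4 = \<lparr>carrier = {A. orthogonal_matrix A \<and> det A = 1}, mult = (**), one = mat 1\<rparr>"

definition Knn_embedding ::
  "nat \<Rightarrow> (bool \<times> nat \<Rightarrow> real^4) \<Rightarrow> (bool \<times> nat \<Rightarrow> bool \<times> nat \<Rightarrow> real \<Rightarrow> real^4) \<Rightarrow> bool" where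
  "Knn_embedding n pos edge \<longleftrightarrow>
     inj_on pos (Kvert n) \<and> pos ` Kvert n \<subseteq> sphere 0 1 \<and>
     (\<forall>x\<in>KV n. \<forall>y\<in>KW n.
        arc (edge x y) \<and> pathstart (edge x y) = pos x \<and> pathfinish (edge x y) = pos y \<and>
        path_image (edge x y) \<subseteq> sphere 0 1 \<and>
        (\<forall>z\<in>Kvert n. pos z \<in> path_image (edge x y) \<longrightarrow> z = x \<or> z = y)) \<and>
     (\<forall>x\<in>KV n. \<forall>y\<in>KW n. \<forall>x'\<in>KV n. \<forall>y'\<in>KW n. (x, y) \<noteq> (x', y') \<longrightarrow>
        path_image (edge x y) \<inter> path_image (edge x' y') \<subseteq> pos ` ({x, y} \<inter> {x', y'}))"

definition edge_img ::
  "nat \<Rightarrow> (bool \<times> nat \<Rightarrow> bool \<times> nat \<Rightarrow> real \<Rightarrow> real^4) \<Rightarrow> bool \<times> nat \<Rightarrow> bool \<times> nat \<Rightarrow> (real^4) set" where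
  "edge_img n edge x y = (if x \<in> KV n then path_image (edge x y) else path_image (edge y x))"

definition Knn_image ::
  "nat \<Rightarrow> (bool \<times> nat \<Rightarrow> real^4) \<Rightarrow> (bool \<times> nat \<Rightarrow> bool \<times> nat \<Rightarrow> real \<Rightarrow> real^4) \<Rightarrow> (real^4) set" where
  "Knn_image n pos edge = pos ` Kvert n \<union> (\<Union>x\<in>KV n. \<Union>y\<in>KW n. path_image (edge x y))"

definition induces ::
  "nat \<Rightarrow> (bool \<times> nat \<Rightarrow> real^4) \<Rightarrow> (bool \<times> nat \<Rightarrow> bool \<times> nat \<Rightarrow> real \<Rightarrow> real^4) \<Rightarrow>
   real^4^4 \<Rightarrow> (bool \<times> nat \<Rightarrow> bool \<times> nat) \<Rightarrow> bool" where
  "induces n pos edge A g \<longleftrightarrow>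
     (\<lambda>p. A *v p) ` Knn_image n pos edge = Knn_image n pos edge \<and>
     (\<forall>v\<in>Kvert n. A *v pos v = pos (g v)) \<and>
     (\<forall>x\<in>Kvert n. \<forall>y\<in>Kvert n. Kadj n x y \<longrightarrow>
        (\<lambda>p. A *v p) ` edge_img n edge x y = edge_img n edge (g x) (g y))"

end

theory Submission
  imports Defs "HOL-Library.Disjoint_Sets"
begin

text \<open>Since \<open>A\<^sub>4\<close> is generated by elements of order 3 and an automorphism of \<open>K\<^sub>n\<^sub>,\<^sub>n\<close>
  swapping the two sides has even order, every element of \<open>G\<close> preserves \<open>V\<close> and \<open>W\<close>. Let the
  involution \<open>g\<close> fix exactly one vertex \<open>v \<in> V\<close>; then \<open>n = |V|\<close> is odd. In \<open>A\<^sub>4\<close>, \<open>g\<close> commutes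
  with a second involution \<open>g'\<close>, which therefore also fixes \<open>v\<close>. An involution in \<open>SO(4)\<close> is
  determined by two independent fixed vectors, and one that maps an embedded edge to itself
  while fixing its endpoints fixes it pointwise; so \<open>g\<close> and \<open>g'\<close> cannot both fix a vertex
  \<open>w \<in> W\<close>, since they would then fix the edge \<open>vw\<close> and coincide. Hence \<open>g'\<close> acts freely on the
  \<open>g\<close>-fixed vertices of \<open>W\<close> and \<open>g\<close> acts freely on the others, so \<open>n = |W|\<close> is even.\<close>

lemma card_even_if_fixpoint_free_involution:
  assumes "finite X" "\<And>x. x \<in> X \<Longrightarrow> h x \<in> X" "\<And>x. x \<in> X \<Longrightarrow> h (h x) = x"
    "\<And>x. x \<in> X \<Longrightarrow> h x \<noteq> x"
  shows "even (card X)"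
proof -
  have "(\<Sum>x\<in>X. 1 :: 2) = 0"
    by (rule sum_involution_eq_0[where h = h]) (use assms in auto)
  then have "of_nat (card X) = (0 :: 2)" by simp
  then show ?thesis by (simp add: of_nat_eq_0_iff_char_dvd)
qed

lemma card_odd_if_involution_with_unique_fixpoint:
  assumes "finite X" "\<And>x. x \<in> X \<Longrightarrow> h x \<in> X" "\<And>x. x \<in> X \<Longrightarrow> h (h x) = x"
    and fixpoints: "{x \<in> X. h x = x} = {v}"
  shows "odd (card X)"
proof -
  have v: "v \<in> X" "h v = v" using fixpoints by auto
  have "even (card (X - {v}))"
  proof (rule card_even_if_fixpoint_free_involution)
    fix x assume x: "x \<in> X - {v}"
    then show "h (h x) = x" using assms(3) by blast
    show "h x \<noteq> x" using x fixpoints by blast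
    show "h x \<in> X - {v}" using x v assms(2) assms(3)[of x] by auto
  qed (use assms(1) in simp)
  moreover have "card X = Suc (card (X - {v}))"
    using v assms(1) by (simp add: card_Suc_Diff1 del: card_Diff_insert)
  ultimately show ?thesis by simp
qed

lemma card_even_if_commuting_involutions_without_common_fixpoint:
  assumes "finite X"
    and "\<And>x. x \<in> X \<Longrightarrow> f x \<in> X" "\<And>x. x \<in> X \<Longrightarrow> f (f x) = x"
    and "\<And>x. x \<in> X \<Longrightarrow> g x \<in> X" "\<And>x. x \<in> X \<Longrightarrow> g (g x) = x"
    and "\<And>x. x \<in> X \<Longrightarrow> f (g x) = g (f x)"
    and "\<And>x. x \<in> X \<Longrightarrow> f x = x \<Longrightarrow> g x \<noteq> x"
  shows "even (card X)"
proof -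
  define F where "F = {x \<in> X. f x = x}"
  have "even (card F)"
    by (rule card_even_if_fixpoint_free_involution[where h = g])
      (use assms in \<open>auto simp: F_def\<close>)
  moreover have "even (card (X - F))"
    by (rule card_even_if_fixpoint_free_involution[where h = f])
      (use assms in \<open>auto simp: F_def\<close>)
  moreover have "card X = card F + card (X - F)"
    using assms(1) card_Diff_subset[of F X] card_mono[of X F] by (auto simp: F_def)
  ultimately show ?thesis by simp
qed

text \<open>The bare name \<open>transpose\<close> denotes the matrix transpose in this context.\<close>
abbreviation transp :: "nat \<Rightarrow> nat \<Rightarrow> nat \<Rightarrow> nat" where
  "transp \<equiv> Transposition.transpose"

lemma permutes_1234_eq_iff:
  fixes x f :: "nat \<Rightarrow> nat"
  assumes "x permutes {1..4}" "f permutes {1..4}"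
  shows "x = f \<longleftrightarrow> x 1 = f 1 \<and> x 2 = f 2 \<and> x 3 = f 3 \<and> x 4 = f 4"
proof (intro iffI ext)
  fix k assume vals: "x 1 = f 1 \<and> x 2 = f 2 \<and> x 3 = f 3 \<and> x 4 = f 4"
  show "x k = f k"
  proof (cases "k \<in> {1..4}")
    case True
    then have "k = 1 \<or> k = 2 \<or> k = 3 \<or> k = 4" by auto
    then show ?thesis using vals by auto
  qed (use assms permutes_not_in in metis)
qed simp

lemma alt4_involution_cases:
  assumes x: "x \<in> carrier (alt_group 4)" and xx: "x \<circ> x = id" and "x \<noteq> id"
  shows "x = transp 1 2 \<circ> transp 3 4 \<or> x = transp 1 3 \<circ> transp 2 4 \<or> x = transp 1 4 \<circ> transp 2 3"
proof -
  have xp: "x permutes {1..4}" and "evenperm x" using x by (auto simp: alt_group_carrier)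
  then have not_transp: "x \<noteq> transp a b" if "a \<noteq> b" for a b
    using that evenperm_swap by metis
  have range: "x i = 1 \<or> x i = 2 \<or> x i = 3 \<or> x i = 4" if "i \<in> {1..4}" for i
  proof -
    have "x i \<in> {1..4}" using permutes_in_image[OF xp] that by blast
    then show ?thesis by (simp add: atLeastAtMost_iff) presburger
  qed
  have inv: "x (x i) = i" for i using xx by (metis comp_apply id_apply)
  have "x = id \<or> x = transp 1 2 \<or> x = transp 1 3 \<or> x = transp 1 4 \<or> x = transp 2 3 \<or>
      x = transp 2 4 \<or> x = transp 3 4 \<or>
      x = transp 1 2 \<circ> transp 3 4 \<or> x = transp 1 3 \<circ> transp 2 4 \<or> x = transp 1 4 \<circ> transp 2 3"
    using range[of 1] range[of 2] range[of 3] range[of 4] inv[of 1] inv[of 2] inv[of 3] inv[of 4]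
    by (simp add: permutes_1234_eq_iff[OF xp] permutes_swap_id permutes_compose)
      (elim disjE; simp add: Transposition.transpose_def)
  then show ?thesis using not_transp \<open>x \<noteq> id\<close> by auto
qed

lemma alt4_commuting_involution:
  assumes "x \<in> carrier (alt_group 4)" "x \<circ> x = id" "x \<noteq> id"
  obtains y where "y \<in> carrier (alt_group 4)" "y \<circ> y = id" "y \<noteq> id" "y \<noteq> x" "x \<circ> y = y \<circ> x"
proof -
  define K where
    "K = {transp 1 2 \<circ> transp 3 4, transp 1 3 \<circ> transp 2 4, transp (1::nat) 4 \<circ> transp 2 3}"
  have K_carrier: "y \<in> carrier (alt_group 4)" if "y \<in> K" for y
    using that by (auto simp: K_def alt_group_carrier permutes_swap_id permutes_compose
        evenperm_comp permutation_swap_id evenperm_swap)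
  have K_involutions: "y \<circ> y = id" "y \<noteq> id" if "y \<in> K" for y
    using that by (auto simp: K_def fun_eq_iff Transposition.transpose_def)
  have K_commute: "x \<circ> y = y \<circ> x" if "x \<in> K" "y \<in> K" for x y
    using that by (auto simp: K_def fun_eq_iff Transposition.transpose_def)
  have "(transp 1 2 \<circ> transp 3 4) 1 \<noteq> (transp (1::nat) 3 \<circ> transp 2 4) 1"
    by (simp add: Transposition.transpose_def)
  then have "transp 1 2 \<circ> transp 3 4 \<noteq> transp (1::nat) 3 \<circ> transp 2 4" by metis
  then obtain y where "y \<in> K" "y \<noteq> x" unfolding K_def by blast
  moreover have "x \<in> K" using alt4_involution_cases[OF assms] by (simp add: K_def)
  ultimately show ?thesis using that K_carrier K_involutions K_commute by blast
qed

lemma (in group) alt4_iso_commuting_involution: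
  assumes "G \<cong> alt_group 4" and x: "x \<in> carrier G" "x \<otimes> x = \<one>" "x \<noteq> \<one>"
  obtains y where "y \<in> carrier G" "y \<otimes> y = \<one>" "y \<noteq> \<one>" "y \<noteq> x" "x \<otimes> y = y \<otimes> x"
proof -
  obtain f where f: "f \<in> iso G (alt_group 4)" using assms(1) by (auto simp: is_iso_def)
  interpret f: group_hom G "alt_group 4" f
    using f alt_group_is_group by (auto simp: group_hom_def group_hom_axioms_def iso_def is_group)
  have f_eq: "f a = f b \<longleftrightarrow> a = b" if "a \<in> carrier G" "b \<in> carrier G" for a b
    using f that by (auto simp: iso_def bij_betw_def inj_on_eq_iff)
  have "f x \<in> carrier (alt_group 4)" "f x \<circ> f x = id" "f x \<noteq> id"
    using x f_eq[of x \<one>] f.hom_mult[of x x] by (simp_all add: alt_group_one alt_group_mult)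
  then obtain y' where y': "y' \<in> carrier (alt_group 4)" "y' \<circ> y' = id" "y' \<noteq> id"
    "y' \<noteq> f x" "f x \<circ> y' = y' \<circ> f x"
    by (rule alt4_commuting_involution)
  moreover have "y' \<in> f ` carrier G" using f y'(1) by (simp add: iso_def bij_betw_def)
  then obtain y where y: "y \<in> carrier G" "f y = y'" by blast
  ultimately show thesis
    using that x f_eq[of y \<one>] f_eq[of y x] f_eq[of "y \<otimes> y" \<one>] f_eq[of "x \<otimes> y" "y \<otimes> x"]
    by (simp add: alt_group_one alt_group_mult)
qed

lemma (in group) alt4_iso_generated_by_elements_of_order_3:
  assumes "G \<cong> alt_group 4" "subgroup H G"
    and "\<And>a. a \<in> carrier G \<Longrightarrow> a \<otimes> a \<otimes> a = \<one> \<Longrightarrow> a \<in> H"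
  shows "H = carrier G"
proof -
  obtain h where h: "h \<in> iso (alt_group 4) G"
    using iso_sym[OF assms(1)] by (auto simp: is_iso_def)
  interpret h: group_hom "alt_group 4" G h
    using h alt_group_is_group by (auto simp: group_hom_def group_hom_axioms_def iso_def is_group)
  have "h ` three_cycles 4 \<subseteq> H"
  proof (rule image_subsetI)
    fix c assume c: "c \<in> three_cycles 4"
    then have c_carrier: "c \<in> carrier (alt_group 4)" using three_cycles_incl by blast
    obtain cs where "c = cycle_of_list cs" "cycle cs" "length cs = 3" using c by blast
    then have "c \<circ> c \<circ> c = id"
      using cycle_is_id_root[of cs] by (simp add: numeral_3_eq_3 funpow_Suc_right o_assoc)
    then have "h c \<otimes> h c \<otimes> h c = \<one>"
      using h.hom_mult[of "c \<circ> c" c] h.hom_mult[of c c] h.hom_one c_carrier h.G.m_closed[of c c]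
      by (simp add: alt_group_mult alt_group_one)
    then show "h c \<in> H" using assms(3) c_carrier by simp
  qed
  then have "generate G (h ` three_cycles 4) \<subseteq> H"
    using generate_subgroup_incl assms(2) by blast
  moreover have "generate G (h ` three_cycles 4) = carrier G"
    using h.generate_img[OF three_cycles_incl] alt_group_carrier_as_three_cycles h
    by (simp add: iso_def bij_betw_def)
  ultimately show ?thesis using subgroup.subset[OF assms(2)] by blast
qed

lemma iso_involution_preimage:
  assumes "group G" "group H" "f \<in> iso G H"
    and y: "y \<in> carrier H" "y \<otimes>\<^bsub>H\<^esub> y = \<one>\<^bsub>H\<^esub>" "y \<noteq> \<one>\<^bsub>H\<^esub>"
  obtains x where "x \<in> carrier G" "f x = y" "x \<otimes>\<^bsub>G\<^esub> x = \<one>\<^bsub>G\<^esub>" "x \<noteq> \<one>\<^bsub>G\<^esub>"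
proof -
  interpret f: group_hom G H f
    using assms by (simp add: group_hom_def group_hom_axioms_def iso_def)
  have inj: "inj_on f (carrier G)" and "y \<in> f ` carrier G"
    using assms(3) y(1) by (auto simp: iso_def bij_betw_def)
  then obtain x where x: "x \<in> carrier G" "f x = y" by blast
  have "f (x \<otimes>\<^bsub>G\<^esub> x) = f \<one>\<^bsub>G\<^esub>" using x y(2) by simp
  then have "x \<otimes>\<^bsub>G\<^esub> x = \<one>\<^bsub>G\<^esub>" using inj_onD[OF inj] x(1) by blast
  moreover have "x \<noteq> \<one>\<^bsub>G\<^esub>" using x y(3) by auto
  ultimately show thesis using that x by blast
qed

lemma KV_KW_disjoint: "KV n \<inter> KW n = {}"
  by (auto simp: KV_def KW_def)

lemma KV_eq: "KV n = Pair False ` {..<n}" and KW_eq: "KW n = Pair True ` {..<n}"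
  by (auto simp: KV_def KW_def)

lemma finite_KV: "finite (KV n)" and finite_KW: "finite (KW n)"
  by (simp_all add: KV_eq KW_eq)

lemma card_KV: "card (KV n) = n" and card_KW: "card (KW n) = n"
  by (simp_all add: KV_eq KW_eq card_image inj_on_def)

lemma Kadj_iff:
  "x \<in> Kvert n \<Longrightarrow> y \<in> Kvert n \<Longrightarrow> Kadj n x y \<longleftrightarrow> (x \<in> KV n \<longleftrightarrow> y \<in> KW n)"
  using KV_KW_disjoint[of n] by (auto simp: Kadj_def Kvert_def)

lemma group_Knn_aut_group: "group (Knn_aut_group n)"
proof (rule groupI)
  fix g h assume "g \<in> carrier (Knn_aut_group n)" "h \<in> carrier (Knn_aut_group n)"
  then show "g \<otimes>\<^bsub>Knn_aut_group n\<^esub> h \<in> carrier (Knn_aut_group n)"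
    by (auto simp: Knn_aut_group_def Knn_aut_def permutes_compose permutes_in_image)
next
  fix g assume "g \<in> carrier (Knn_aut_group n)"
  then have g: "g permutes Kvert n" "\<forall>x\<in>Kvert n. \<forall>y\<in>Kvert n. Kadj n (g x) (g y) = Kadj n x y"
    by (auto simp: Knn_aut_group_def Knn_aut_def)
  let ?g' = "Hilbert_Choice.inv g"
  have g': "?g' permutes Kvert n" using permutes_inv[OF g(1)] .
  have "Kadj n (?g' x) (?g' y) = Kadj n x y" if "x \<in> Kvert n" "y \<in> Kvert n" for x y
    using g(2) that permutes_in_image[OF g'] permutes_inverses(1)[OF g(1)] by metis
  then have "?g' \<in> Knn_aut n" using g' by (simp add: Knn_aut_def)
  moreover have "?g' \<circ> g = id" using permutes_inv_o(2)[OF g(1)] .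
  ultimately show "\<exists>h\<in>carrier (Knn_aut_group n). h \<otimes>\<^bsub>Knn_aut_group n\<^esub> g = \<one>\<^bsub>Knn_aut_group n\<^esub>"
    by (auto simp: Knn_aut_group_def)
qed (simp_all add: Knn_aut_group_def Knn_aut_def permutes_id o_assoc)

definition preserves_sides :: "nat \<Rightarrow> (bool \<times> nat \<Rightarrow> bool \<times> nat) \<Rightarrow> bool" where
  "preserves_sides n g \<longleftrightarrow> (\<forall>x\<in>Kvert n. g x \<in> KV n \<longleftrightarrow> x \<in> KV n)"

lemma Knn_aut_in_Kvert: "g \<in> Knn_aut n \<Longrightarrow> x \<in> Kvert n \<Longrightarrow> g x \<in> Kvert n"
  by (auto simp: Knn_aut_def permutes_in_image)

lemma Knn_aut_side_change_constant:
  assumes g: "g \<in> Knn_aut n" and "x \<in> Kvert n" "y \<in> Kvert n"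
  shows "(g x \<in> KV n \<longleftrightarrow> x \<in> KV n) \<longleftrightarrow> (g y \<in> KV n \<longleftrightarrow> y \<in> KV n)"
proof -
  have "Kadj n (g x) (g y) \<longleftrightarrow> Kadj n x y" using g assms(2,3) by (simp add: Knn_aut_def)
  moreover have "z \<in> KW n \<longleftrightarrow> z \<notin> KV n" if "z \<in> Kvert n" for z
    using that KV_KW_disjoint[of n] by (auto simp: Kvert_def)
  ultimately show ?thesis
    using assms Knn_aut_in_Kvert[OF g] by (simp add: Kadj_iff) blast
qed

lemma Knn_aut_order_3_preserves_sides:
  assumes g: "g \<in> Knn_aut n" and "g \<circ> g \<circ> g = id"
  shows "preserves_sides n g"
  unfolding preserves_sides_def
proof
  fix x assume x: "x \<in> Kvert n"
  have "g (g (g x)) = x" using assms(2) by (metis comp_apply id_apply)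
  moreover have "g x \<in> Kvert n" "g (g x) \<in> Kvert n" using x Knn_aut_in_Kvert[OF g] by blast+
  ultimately show "g x \<in> KV n \<longleftrightarrow> x \<in> KV n"
    using x Knn_aut_side_change_constant[OF g, of x] by metis
qed

lemma subgroup_preserves_sides: "subgroup {g \<in> Knn_aut n. preserves_sides n g} (Knn_aut_group n)"
proof -
  interpret group "Knn_aut_group n" by (rule group_Knn_aut_group)
  show ?thesis
  proof (rule subgroupI)
    fix g assume g: "g \<in> {g \<in> Knn_aut n. preserves_sides n g}"
    let ?g' = "inv\<^bsub>Knn_aut_group n\<^esub> g"
    have g': "?g' \<in> Knn_aut n" "g \<circ> ?g' = id"
      using g inv_closed r_inv by (auto simp: Knn_aut_group_def)
    have "?g' x \<in> KV n \<longleftrightarrow> x \<in> KV n" if x: "x \<in> Kvert n" for x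
    proof -
      have "g (?g' x) = x" using g'(2) by (metis comp_apply id_apply)
      moreover have "?g' x \<in> Kvert n" using Knn_aut_in_Kvert[OF g'(1) x] .
      ultimately show ?thesis using g by (force simp: preserves_sides_def)
    qed
    then show "?g' \<in> {g \<in> Knn_aut n. preserves_sides n g}"
      using g' by (simp add: preserves_sides_def)
  next
    fix g h assume g: "g \<in> {g \<in> Knn_aut n. preserves_sides n g}"
      and h: "h \<in> {g \<in> Knn_aut n. preserves_sides n g}"
    then have "g \<circ> h \<in> Knn_aut n" using m_closed by (simp add: Knn_aut_group_def)
    moreover have "preserves_sides n (g \<circ> h)"
      using g h Knn_aut_in_Kvert[of h n] by (simp add: preserves_sides_def)
    ultimately show "g \<otimes>\<^bsub>Knn_aut_group n\<^esub> h \<in> {g \<in> Knn_aut n. preserves_sides n g}"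
      by (simp add: Knn_aut_group_def)
  next
    have "id \<in> Knn_aut n" by (simp add: Knn_aut_def permutes_id)
    then show "{g \<in> Knn_aut n. preserves_sides n g} \<noteq> {}" by (auto simp: preserves_sides_def)
  qed (auto simp: Knn_aut_group_def)
qed

lemma alt4_subgroup_preserves_sides:
  assumes G: "subgroup G (Knn_aut_group n)" and "(Knn_aut_group n)\<lparr>carrier := G\<rparr> \<cong> alt_group 4"
    and g: "g \<in> G"
  shows "x \<in> KV n \<Longrightarrow> g x \<in> KV n" and "x \<in> KW n \<Longrightarrow> g x \<in> KW n"
proof -
  interpret K: group "Knn_aut_group n" by (rule group_Knn_aut_group)
  let ?P = "{g \<in> Knn_aut n. preserves_sides n g}"
  have "subgroup (G \<inter> ?P) (Knn_aut_group n\<lparr>carrier := G\<rparr>)"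
    using K.subgroup_incl K.subgroups_Inter_pair[OF G subgroup_preserves_sides] G by blast
  then have "G \<inter> ?P = G"
    using group.alt4_iso_generated_by_elements_of_order_3[OF K.subgroup_imp_group[OF G] assms(2)]
      subgroup.subset[OF G]
    by (simp add: Knn_aut_group_def subset_iff Knn_aut_order_3_preserves_sides)
  then have "g \<in> Knn_aut n" "preserves_sides n g" using g by blast+
  then show "x \<in> KV n \<Longrightarrow> g x \<in> KV n" and "x \<in> KW n \<Longrightarrow> g x \<in> KW n"
    using Knn_aut_in_Kvert[of g n x] KV_KW_disjoint[of n] by (auto simp: preserves_sides_def Kvert_def)
qed

lemma involution_of_unit_interval_fixing_0:
  fixes F :: "real \<Rightarrow> real"
  assumes cont: "continuous_on {0..1} F" and into: "F ` {0..1} \<subseteq> {0..1}"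
    and invol: "\<And>t. t \<in> {0..1} \<Longrightarrow> F (F t) = t" and F0: "F 0 = 0"
    and t: "t \<in> {0..1}"
  shows "F t = t"
proof -
  have "inj_on F {0..1}" by (metis inj_onI invol)
  then have "strict_mono_on {0..1} F \<or> strict_antimono_on {0..1} F"
    using injective_eq_monotone_map[of "{0..1}" F] cont by (simp add: is_interval_cc)
  moreover have "\<not> strict_antimono_on {0..1} F"
  proof
    assume "strict_antimono_on {0..1} F"
    then have "F 1 < F 0" by (auto simp: monotone_on_def)
    moreover have "F 1 \<in> {0..1}" using into by (simp add: image_subset_iff)
    ultimately show False using F0 by simp
  qed
  ultimately have mono: "strict_mono_on {0..1} F" by blast
  have Ft: "F t \<in> {0..1}" using into t by blast
  show ?thesis
  proof (cases "F t" t rule: linorder_cases)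
    case less
    then have "F (F t) < F t" using mono t Ft by (auto simp: monotone_on_def)
    then show ?thesis using invol[OF t] less by simp
  next
    case greater
    then have "F t < F (F t)" using mono t Ft by (auto simp: monotone_on_def)
    then show ?thesis using invol[OF t] greater by simp
  qed
qed

lemma arc_pointwise_fixed_by_involution:
  fixes g :: "real \<Rightarrow> 'a::t2_space"
  assumes arc: "arc g" and cont: "continuous_on (path_image g) T"
    and into: "T ` path_image g \<subseteq> path_image g"
    and invol: "\<And>x. x \<in> path_image g \<Longrightarrow> T (T x) = x"
    and start: "T (pathstart g) = pathstart g"
    and x: "x \<in> path_image g"
  shows "T x = x"
proof -
  obtain h where hom: "homeomorphism {0..1} (path_image g) g h"
    using homeomorphism_arc[OF arc] by blast
  then have hg: "\<And>t. t \<in> {0..1} \<Longrightarrow> h (g t) = t"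
    and gh: "\<And>y. y \<in> path_image g \<Longrightarrow> g (h y) = y"
    and h_image: "h ` path_image g = {0..1}" and g_image: "g ` {0..1} = path_image g"
    and cont_g: "continuous_on {0..1} g" and cont_h: "continuous_on (path_image g) h"
    unfolding homeomorphism_def by auto
  define F where "F = h \<circ> T \<circ> g"
  obtain t where t: "t \<in> {0..1}" "x = g t" using x g_image by blast
  have "F t = t"
  proof (rule involution_of_unit_interval_fixing_0[OF _ _ _ _ t(1)])
    show "continuous_on {0..1} F"
      unfolding F_def
      by (intro continuous_on_compose cont_g continuous_on_subset[OF cont]
          continuous_on_subset[OF cont_h]) (use g_image into in auto)
    show "F ` {0..1} \<subseteq> {0..1}" using g_image into h_image by (auto simp: F_def)
    show "F (F s) = s" if s: "s \<in> {0..1}" for s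
    proof -
      have gs: "g s \<in> path_image g" using s g_image by blast
      then have "g (F s) = T (g s)" using into gh by (auto simp: F_def)
      then show ?thesis using gs invol hg[OF s] by (simp add: F_def)
    qed
    show "F 0 = 0" using start hg[of 0] by (simp add: F_def pathstart_def)
  qed
  then have "g (h (T x)) = x" using t by (simp add: F_def)
  then show ?thesis using gh x into by auto
qed

lemma group_SO4: "group SO4"
proof (rule groupI)
  fix A assume "A \<in> carrier SO4"
  then have "transpose A \<in> carrier SO4" "transpose A ** A = mat 1"
    by (auto simp: SO4_def det_transpose orthogonal_matrix_def)
  then show "\<exists>B\<in>carrier SO4. B \<otimes>\<^bsub>SO4\<^esub> A = \<one>\<^bsub>SO4\<^esub>"
    by (intro bexI[of _ "transpose A"]) (simp_all add: SO4_def)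
qed (auto simp: SO4_def orthogonal_matrix_mul det_mul matrix_mul_assoc orthogonal_matrix_id)

lemma det_eq_prod_of_orthogonal_eigenbasis:
  fixes A :: "real^'n^'n" and c :: "'n \<Rightarrow> real^'n" and d :: "'n \<Rightarrow> real"
  assumes eig: "\<And>j. A *v c j = d j *\<^sub>R c j" and nz: "\<And>j. c j \<noteq> 0"
    and orth: "\<And>i j. i \<noteq> j \<Longrightarrow> c i \<bullet> c j = 0"
  shows "det A = prod d UNIV"
proof -
  define M :: "real^'n^'n" where "M = (\<chi> i j. c j $ i)"
  define D :: "real^'n^'n" where "D = (\<chi> i j. if i = j then d i else 0)"
  have "(A ** M) $ i $ j = (M ** D) $ i $ j" for i j
  proof -
    have "(A ** M) $ i $ j = (A *v c j) $ i"
      by (simp add: M_def matrix_matrix_mult_def matrix_vector_mult_def)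
    also have "\<dots> = (M ** D) $ i $ j"
      by (simp add: eig M_def D_def matrix_matrix_mult_def if_distrib sum.delta' cong: if_cong)
    finally show ?thesis .
  qed
  then have AM: "A ** M = M ** D" by (simp add: vec_eq_iff)
  have "(transpose M ** M) $ i $ j = (if i = j then c i \<bullet> c i else 0)" for i j
    using orth by (auto simp: M_def matrix_matrix_mult_def transpose_def inner_vec_def)
  then have "det (transpose M ** M) = (\<Prod>i\<in>UNIV. c i \<bullet> c i)"
    by (subst det_diagonal) auto
  also have "\<dots> \<noteq> 0" using nz by simp
  finally have "det M \<noteq> 0" by (metis det_mul det_transpose mult_zero_left)
  moreover have "det A * det M = det M * det D" using AM by (metis det_mul)
  ultimately have "det A = det D" by simp
  also have "det D = prod d UNIV" by (subst det_diagonal) (auto simp: D_def)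
  finally show ?thesis .
qed

lemma orthogonal_matrix_inner:
  fixes A :: "real^'n^'n"
  assumes "orthogonal_matrix A"
  shows "(A *v x) \<bullet> (A *v y) = x \<bullet> y"
  using assms orthogonal_transformation_matrix[of "(*v) A"]
  by (simp add: orthogonal_transformation_def matrix_vector_mul_linear)

lemma involution_matrix_neg_eigenvector:
  fixes A :: "real^'n^'n"
  assumes "A ** A = mat 1" "A \<noteq> mat 1"
  obtains z where "A *v z = - z" "z \<noteq> 0"
proof -
  obtain z0 where "A *v z0 \<noteq> z0"
    using assms(2) by (metis matrix_eq matrix_vector_mul_lid)
  moreover have "A *v (A *v z0) = z0" by (simp add: matrix_vector_mul_assoc assms(1))
  ultimately show thesis
    using that[of "z0 - A *v z0"] by (simp add: matrix_vector_mult_diff_distrib)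
qed

text \<open>Otherwise \<open>x + A x\<close> would be a third fixed direction orthogonal to \<open>p\<close> and \<open>r\<close>;
  together with a nonzero vector negated by \<open>A\<close> it forms an orthogonal eigenbasis
  with eigenvalues \<open>1, 1, 1, -1\<close>, forcing \<open>det A = -1\<close>.\<close>
lemma SO4_involution_neg_on_orthogonal_complement:
  fixes A :: "real^4^4"
  assumes A: "A \<in> carrier SO4" "A ** A = mat 1" "A \<noteq> mat 1"
    and p: "A *v p = p" "p \<noteq> 0" and r: "A *v r = r" "r \<noteq> 0" and pr: "p \<bullet> r = 0"
    and xp: "x \<bullet> p = 0" and xr: "x \<bullet> r = 0"
  shows "A *v x = - x"
proof (rule ccontr)
  assume nx: "A *v x \<noteq> - x"
  have AA: "A *v (A *v u) = u" for u
    by (simp add: matrix_vector_mul_assoc A(2))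
  have fixed_orth: "(A *v u) \<bullet> f = u \<bullet> f" if "A *v f = f" for u f
    using orthogonal_matrix_inner[of A u f] A(1) that by (simp add: SO4_def)
  define y where "y = x + A *v x"
  have y: "A *v y = y" "y \<noteq> 0"
    using nx by (auto simp: y_def matrix_vector_right_distrib AA add_eq_0_iff add.commute)
  have yp: "y \<bullet> p = 0" and yr: "y \<bullet> r = 0"
    using fixed_orth[OF p(1), of x] fixed_orth[OF r(1), of x] xp xr
    by (simp_all add: y_def inner_add_left)
  obtain z where z: "A *v z = - z" "z \<noteq> 0"
    using involution_matrix_neg_eigenvector[OF A(2,3)] .
  have z_orth: "z \<bullet> f = 0" if "A *v f = f" for f
    using fixed_orth[OF that, of z] by (simp add: z(1))
  define c :: "4 \<Rightarrow> real^4" where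
    "c = (\<lambda>i. if i = 1 then p else if i = 2 then r else if i = 3 then y else z)"
  define d :: "4 \<Rightarrow> real" where "d = (\<lambda>i. if i = 4 then -1 else 1)"
  have "det A = prod d UNIV"
  proof (rule det_eq_prod_of_orthogonal_eigenbasis)
    fix j :: 4
    show "A *v c j = d j *\<^sub>R c j" "c j \<noteq> 0"
      using exhaust_4[of j] p r y z by (auto simp: c_def d_def)
  next
    fix i j :: 4
    assume "i \<noteq> j"
    moreover have "p \<bullet> r = 0" "p \<bullet> y = 0" "p \<bullet> z = 0" "r \<bullet> y = 0" "r \<bullet> z = 0" "y \<bullet> z = 0"
      using pr yp yr z_orth[OF p(1)] z_orth[OF r(1)] z_orth[OF y(1)] by (simp_all add: inner_commute)
    ultimately show "c i \<bullet> c j = 0"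
      using exhaust_4[of i] exhaust_4[of j] by (auto simp: c_def inner_commute)
  qed
  also have "\<dots> = d 4 * prod d (UNIV - {4})"
    by (simp add: prod.remove)
  also have "\<dots> = -1"
    by (simp add: d_def)
  finally show False using A(1) by (simp add: SO4_def)
qed

lemma SO4_involutions_eq_if_fix_orthogonal_pair:
  fixes A B :: "real^4^4"
  assumes A: "A \<in> carrier SO4" "A ** A = mat 1" "A \<noteq> mat 1" "A *v p = p" "A *v r = r"
    and B: "B \<in> carrier SO4" "B ** B = mat 1" "B \<noteq> mat 1" "B *v p = p" "B *v r = r"
    and "p \<noteq> 0" "r \<noteq> 0" "p \<bullet> r = 0"
  shows "A = B"
proof (rule matrix_eq[THEN iffD2], rule allI)
  fix x :: "real^4"
  define a where "a = (x \<bullet> p) / (p \<bullet> p)"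
  define b where "b = (x \<bullet> r) / (r \<bullet> r)"
  define x' where "x' = x - a *\<^sub>R p - b *\<^sub>R r"
  have "x' \<bullet> p = 0" "x' \<bullet> r = 0"
    using assms(11-13) inner_commute[of r p] by (simp_all add: x'_def a_def b_def inner_diff_left)
  then have "A *v x' = - x'" "B *v x' = - x'"
    using A B assms(11-13) SO4_involution_neg_on_orthogonal_complement by blast+
  moreover have "x = x' + a *\<^sub>R p + b *\<^sub>R r" by (simp add: x'_def)
  ultimately show "A *v x = B *v x"
    using A B by (simp add: matrix_vector_right_distrib matrix_vector_mult_scaleR)
qed

lemma arc_path_image_not_subset_doubleton:
  assumes "arc g"
  shows "\<not> path_image g \<subseteq> {a, b}"
proof
  assume "path_image g \<subseteq> {a, b}"
  moreover have "g 0 \<in> path_image g" "g (1/2) \<in> path_image g" "g 1 \<in> path_image g"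
    by (auto simp: path_image_def)
  moreover have "g s \<noteq> g t" if "s \<in> {0..1}" "t \<in> {0..1}" "s \<noteq> t" for s t
    using assms that by (auto simp: arc_def dest: inj_onD)
  then have "g 0 \<noteq> g (1/2)" "g 0 \<noteq> g 1" "g (1/2) \<noteq> g 1" by simp_all
  ultimately show False by auto
qed

lemma induced_involution_fixes_edge:
  assumes emb: "Knn_embedding n pos edge" and v: "v \<in> KV n" and w: "w \<in> KW n"
    and ind: "induces n pos edge A h" and hv: "h v = v" and hw: "h w = w"
    and inv: "A ** A = mat 1" and x: "x \<in> path_image (edge v w)"
  shows "A *v x = x"
proof (rule arc_pointwise_fixed_by_involution[OF _ _ _ _ _ x])
  have vw: "v \<in> Kvert n" "w \<in> Kvert n" "Kadj n v w"
    using v w by (auto simp: Kvert_def Kadj_def)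
  show "arc (edge v w)" using emb v w by (simp add: Knn_embedding_def)
  have "(*v) A ` edge_img n edge v w = edge_img n edge (h v) (h w)"
    using ind vw unfolding induces_def by blast
  then show "(*v) A ` path_image (edge v w) \<subseteq> path_image (edge v w)"
    using hv hw v by (simp add: edge_img_def)
  show "A *v pathstart (edge v w) = pathstart (edge v w)"
    using emb ind v w vw(1) hv by (simp add: Knn_embedding_def induces_def)
  show "A *v (A *v y) = y" for y by (simp add: matrix_vector_mul_assoc inv)
qed (rule matrix_vector_mult_linear_continuous_on)

lemma induced_SO4_involutions_eq_if_fixing_edge:
  assumes emb: "Knn_embedding n pos edge" and v: "v \<in> KV n" and w: "w \<in> KW n"
    and A: "A \<in> carrier SO4" "A ** A = mat 1" "A \<noteq> mat 1"
      "induces n pos edge A h" "h v = v" "h w = w"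
    and B: "B \<in> carrier SO4" "B ** B = mat 1" "B \<noteq> mat 1"
      "induces n pos edge B k" "k v = v" "k w = w"
  shows "A = B"
proof -
  let ?e = "edge v w"
  have e: "arc ?e" "pathstart ?e = pos v" "path_image ?e \<subseteq> sphere 0 1"
    using emb v w by (simp_all add: Knn_embedding_def)
  define p where "p = pos v"
  have p: "p \<in> path_image ?e" "norm p = 1"
    using e(2,3) pathstart_in_path_image[of ?e] by (auto simp: p_def)
  obtain r0 where r0: "r0 \<in> path_image ?e" "r0 \<noteq> p" "r0 \<noteq> - p"
    using arc_path_image_not_subset_doubleton[OF e(1), of p "- p"] by blast
  have "norm r0 = 1" using r0(1) e(3) by auto
  define r where "r = r0 - (p \<bullet> r0) *\<^sub>R p"
  have pr: "p \<bullet> r = 0" using p(2) by (simp add: r_def inner_diff_right norm_eq_1)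
  have "r \<noteq> 0"
  proof
    assume "r = 0"
    then have r0_eq: "r0 = (p \<bullet> r0) *\<^sub>R p" by (simp add: r_def)
    then have "\<bar>p \<bullet> r0\<bar> = 1" using p(2) \<open>norm r0 = 1\<close> by (metis norm_scaleR mult.right_neutral)
    then show False using r0 r0_eq by (auto simp: abs_if split: if_splits)
  qed
  have fixed: "C *v p = p" "C *v r = r"
    if "C ** C = mat 1" "induces n pos edge C c" "c v = v" "c w = w" for C c
  proof -
    have "C *v u = u" if "u \<in> path_image ?e" for u
      using induced_involution_fixes_edge[OF emb v w] that \<open>C ** C = mat 1\<close> \<open>induces n pos edge C c\<close>
        \<open>c v = v\<close> \<open>c w = w\<close> by blast
    then show "C *v p = p" "C *v r = r"
      using p(1) r0(1) by (simp_all add: r_def matrix_vector_mult_diff_distrib matrix_vector_mult_scaleR)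
  qed
  have "p \<noteq> 0" using p(2) by (metis norm_zero zero_neq_one)
  then show ?thesis
    using SO4_involutions_eq_if_fix_orthogonal_pair[OF A(1-3) fixed[OF A(2,4-6)] B(1-3) fixed[OF B(2,4-6)]]
      \<open>r \<noteq> 0\<close> pr by blast
qed

lemma involutions_eq_if_fixing_edge:
  assumes emb: "Knn_embedding n pos edge" and G_sub: "subgroup G (Knn_aut_group n)"
    and Ghat_sub: "subgroup Ghat SO4"
    and \<phi>_iso: "\<phi> \<in> iso (SO4\<lparr>carrier := Ghat\<rparr>) ((Knn_aut_group n)\<lparr>carrier := G\<rparr>)"
    and induced: "\<forall>A\<in>Ghat. induces n pos edge A (\<phi> A)"
    and v: "v \<in> KV n" and w: "w \<in> KW n"
    and g: "g \<in> G" "g \<circ> g = id" "g \<noteq> id" "g v = v" "g w = w"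
    and h: "h \<in> G" "h \<circ> h = id" "h \<noteq> id" "h v = v" "h w = w"
  shows "g = h"
proof -
  have M: "group ((Knn_aut_group n)\<lparr>carrier := G\<rparr>)"
    using group.subgroup_imp_group[OF group_Knn_aut_group G_sub] .
  have Ghat: "group (SO4\<lparr>carrier := Ghat\<rparr>)"
    using group.subgroup_imp_group[OF group_SO4 Ghat_sub] .
  obtain A where A: "A \<in> Ghat" "\<phi> A = g" "A ** A = mat 1" "A \<noteq> mat 1"
    using iso_involution_preimage[OF Ghat M \<phi>_iso, where y = g] g
    by (auto simp: Knn_aut_group_def SO4_def)
  obtain B where B: "B \<in> Ghat" "\<phi> B = h" "B ** B = mat 1" "B \<noteq> mat 1"
    using iso_involution_preimage[OF Ghat M \<phi>_iso, where y = h] h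
    by (auto simp: Knn_aut_group_def SO4_def)
  have "A = B"
  proof (rule induced_SO4_involutions_eq_if_fixing_edge[OF emb v w])
    show "A \<in> carrier SO4" "B \<in> carrier SO4" using A(1) B(1) subgroup.subset[OF Ghat_sub] by auto
    show "induces n pos edge A g" "induces n pos edge B h" using induced A(1,2) B(1,2) by auto
  qed (use A B g h in auto)
  then show ?thesis using A(2) B(2) by simp
qed

theorem lemma2:
  fixes n :: nat
    and G :: "(bool \<times> nat \<Rightarrow> bool \<times> nat) set"
    and Ghat :: "(real^4^4) set"
    and pos :: "bool \<times> nat \<Rightarrow> real^4"
    and edge :: "bool \<times> nat \<Rightarrow> bool \<times> nat \<Rightarrow> real \<Rightarrow> real^4"
    and \<phi> :: "real^4^4 \<Rightarrow> (bool \<times> nat \<Rightarrow> bool \<times> nat)"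
  assumes G_sub: "subgroup G (Knn_aut_group n)"
    and G_A4: "(Knn_aut_group n)\<lparr>carrier := G\<rparr> \<cong> alt_group 4"
    and emb: "Knn_embedding n pos edge"
    and Ghat_sub: "subgroup Ghat SO4"
    and \<phi>_iso: "\<phi> \<in> iso (SO4\<lparr>carrier := Ghat\<rparr>) ((Knn_aut_group n)\<lparr>carrier := G\<rparr>)"
    and induced: "\<forall>A\<in>Ghat. induces n pos edge A (\<phi> A)"
  shows "\<forall>g\<in>G. g \<noteq> id \<and> g \<circ> g = id \<longrightarrow> card {v \<in> KV n. g v = v} \<noteq> 1"
proof (intro ballI impI notI)
  fix g assume g: "g \<in> G" "g \<noteq> id \<and> g \<circ> g = id" and "card {v \<in> KV n. g v = v} = 1"
  then obtain v where v: "{v \<in> KV n. g v = v} = {v}" by (meson card_1_singletonE)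
  obtain g' where g': "g' \<in> G" "g' \<circ> g' = id" "g' \<noteq> id" "g' \<noteq> g" "g \<circ> g' = g' \<circ> g"
    using group.alt4_iso_commuting_involution[OF group.subgroup_imp_group[OF group_Knn_aut_group G_sub]
        G_A4, of g] g
    by (auto simp: Knn_aut_group_def)
  have invol: "g (g x) = x" "g' (g' x) = x" "g (g' x) = g' (g x)" for x
    using g(2) g'(2,5) by (metis comp_apply id_apply)+
  note sides = alt4_subgroup_preserves_sides[OF G_sub G_A4]
  have vV: "v \<in> KV n" "g v = v" using v by auto
  then have "g' v \<in> {v \<in> KV n. g v = v}" using sides(1)[OF g'(1)] invol(3)[of v] by simp
  then have "g' v = v" using v by blast
  have "odd n"
    using card_odd_if_involution_with_unique_fixpoint[OF finite_KV _ _ v] sides(1)[OF g(1)] invol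
    by (simp add: card_KV)
  moreover have "g' w \<noteq> w" if "w \<in> KW n" "g w = w" for w
    using involutions_eq_if_fixing_edge[OF emb G_sub Ghat_sub \<phi>_iso induced vV(1) that(1)]
      g g' vV(2) \<open>g' v = v\<close> that(2) by auto
  then have "even n"
    using card_even_if_commuting_involutions_without_common_fixpoint[OF finite_KW, where f = g and g = g']
      sides(2)[OF g(1)] sides(2)[OF g'(1)] invol
    by (simp add: card_KW)
  ultimately show False by simp
qed

end
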